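(* Let $(x_n)_{n\ge 1}$ be a sequence of positive real numbers with $\sum_{n=1}^{\infty} x_n<\infty$. For $m\in\mathbb{N}$ let $$E_m(x)=\left\{\sum_{i=1}^{\infty}\epsilon_i x_i \;:\; \epsilon_i\in\{0,1,2,\ldots,m\}\text{ for all } i\in\mathbb{N}\right\}.$$ Then for every $m\in\mathbb{N}$, $E_m(x)$ is homeomorphic to one of the following: (1) a Cantor set; (2) a finite union of intervals; (3) a Cantorval.
   Context: Let $K\subset\mathbb{R}$ be compact. A gap of $K$ is a bounded connected component of $\mathbb{R}\setminus K$; an interval of $K$ is a non-trivial (non-degenerate) connected component of $K$. A perfect subset of $\mathbb{R}$ in which every gap is accumulated on each side by infinitely many intervals and gaps of the set is called an M-Cantorval. A perfect subset of $\mathbb{R}$ in which every gap has an interval adjacent to it on its right and is accumulated on its left by infinitely many intervals and gaps is called an L-Cantorval; an R-Cantorval is defined analogously with left and right interchanged. A Cantorval is an M-, L- or R-Cantorval. A Cantor set means a set homeomorphic to the standard middle-thirds Cantor set. *)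

theory Defs
  imports "HOL-Analysis.Analysis"
begin

fun cantor_stage :: "nat \<Rightarrow> real set" where
  "cantor_stage 0 = {0..1}"
| "cantor_stage (Suc n) = ((\<lambda>t. t / 3) ` cantor_stage n) \<union> ((\<lambda>t. 2/3 + t / 3) ` cantor_stage n)"

definition middle_thirds_cantor :: "real set" where
  "middle_thirds_cantor = (\<Inter>n. cantor_stage n)"

definition is_cantor_set :: "real set \<Rightarrow> bool" where
  "is_cantor_set S \<longleftrightarrow> S homeomorphic middle_thirds_cantor"

definition is_gap :: "real set \<Rightarrow> real set \<Rightarrow> bool" where
  "is_gap K G \<longleftrightarrow> (\<exists>x. x \<notin> K \<and> G = connected_component_set (- K) x) \<and> bounded G"

definition is_interval_of :: "real set \<Rightarrow> real set \<Rightarrow> bool" where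
  "is_interval_of K I \<longleftrightarrow> (\<exists>x\<in>K. I = connected_component_set K x) \<and> (\<exists>a b. a \<in> I \<and> b \<in> I \<and> a \<noteq> b)"

definition perfect_set :: "real set \<Rightarrow> bool" where
  "perfect_set K \<longleftrightarrow> closed K \<and> (\<forall>x\<in>K. x islimpt K)"

text \<open>The point a is accumulated on its left (resp. right) by infinitely many
  intervals and gaps of K: arbitrarily close to a on that side there are intervals and gaps.\<close>
definition acc_left :: "real set \<Rightarrow> real \<Rightarrow> bool" where
  "acc_left K a \<longleftrightarrow> (\<forall>e>0. (\<exists>I. is_interval_of K I \<and> I \<subseteq> {a - e<..<a})
                          \<and> (\<exists>G. is_gap K G \<and> G \<subseteq> {a - e<..<a}))"

definition acc_right :: "real set \<Rightarrow> real \<Rightarrow> bool" where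
  "acc_right K b \<longleftrightarrow> (\<forall>e>0. (\<exists>I. is_interval_of K I \<and> I \<subseteq> {b<..<b + e})
                          \<and> (\<exists>G. is_gap K G \<and> G \<subseteq> {b<..<b + e}))"

text \<open>For a gap G = (Inf G, Sup G): accumulated on its left side means at Inf G from the left,
  on its right side means at Sup G from the right.\<close>
definition is_M_cantorval :: "real set \<Rightarrow> bool" where
  "is_M_cantorval K \<longleftrightarrow> compact K \<and> perfect_set K \<and>
     (\<forall>G. is_gap K G \<longrightarrow> acc_left K (Inf G) \<and> acc_right K (Sup G))"

definition is_L_cantorval :: "real set \<Rightarrow> bool" where
  "is_L_cantorval K \<longleftrightarrow> compact K \<and> perfect_set K \<and>
     (\<forall>G. is_gap K G \<longrightarrow> (\<exists>I. is_interval_of K I \<and> Inf I = Sup G) \<and> acc_left K (Inf G))"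

definition is_R_cantorval :: "real set \<Rightarrow> bool" where
  "is_R_cantorval K \<longleftrightarrow> compact K \<and> perfect_set K \<and>
     (\<forall>G. is_gap K G \<longrightarrow> (\<exists>I. is_interval_of K I \<and> Sup I = Inf G) \<and> acc_right K (Sup G))"

definition is_cantorval :: "real set \<Rightarrow> bool" where
  "is_cantorval K \<longleftrightarrow> is_M_cantorval K \<or> is_L_cantorval K \<or> is_R_cantorval K"

definition is_finite_union_of_intervals :: "real set \<Rightarrow> bool" where
  "is_finite_union_of_intervals S \<longleftrightarrow>
     (\<exists>n::nat. \<exists>a b :: nat \<Rightarrow> real. n \<ge> 1 \<and> (\<forall>i<n. a i < b i) \<and> S = (\<Union>i<n. {a i..b i}))"

definition achievement_set :: "nat \<Rightarrow> (nat \<Rightarrow> real) \<Rightarrow> real set" where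
  "achievement_set m x = {(\<Sum>i. real (e i) * x i) | e :: nat \<Rightarrow> nat. \<forall>i. e i \<le> m}"

end

(*
  E = E_m(x) is compact and perfect. If E has empty interior, it is a nonempty compact perfect
  nowhere dense subset of the line; repeatedly cutting such a set at points outside it, in the
  middle third of its current piece, codes its points by binary sequences exactly as the
  middle-thirds Cantor set is coded by ternary expansions. The two codings give a homeomorphism:
  nearby points of the Cantor set have codes with a long common prefix, and the pieces of the
  other set attached to a prefix of length n have diameter at most (2/3)^n times its diameter.

  Otherwise, for every s > 0, E is a finite union of translates of the achievement set T_s of the
  terms x_i <= s, so T_s has interior. At the left end a of a gap of length u, every digit of a at a
  term x_i < u is m, hence a - T_s lies in E for s < u: intervals of E accumulate at a from the left.
  If E contained [a - d, a], comparing the digits of a and of the points a - sigma would give the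
  Kakeya condition x_k <= m * (sum of the x_j < x_k) for all small x_k, and a greedy argument then
  shows that T_s is an interval, so E is a finite union of intervals. The reflection y -> m sum x - y
  maps E onto itself and handles right ends, so E is an M-Cantorval unless it is a finite union of
  intervals.
*)
theory Submission
  imports Defs
begin

section \<open>Achievement sets\<close>

definition digit_sum :: "(nat \<Rightarrow> real) \<Rightarrow> (nat \<Rightarrow> nat) \<Rightarrow> real" where
  "digit_sum x e = (\<Sum>i. real (e i) * x i)"

lemma achievement_set_iff:
  "y \<in> achievement_set m x \<longleftrightarrow> (\<exists>e. (\<forall>i. e i \<le> m) \<and> y = digit_sum x e)"
  unfolding achievement_set_def digit_sum_def by auto

lemma achievement_set_nonempty: "achievement_set m x \<noteq> {}"
  unfolding achievement_set_def by auto

lemma summable_digits: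
  assumes "\<And>i. x i \<ge> 0" and "summable x" and "\<And>i. e i \<le> m"
  shows "summable (\<lambda>i. real (e i) * x i)"
proof (rule summable_comparison_test)
  show "\<exists>N. \<forall>n\<ge>N. norm (real (e n) * x n) \<le> real m * x n"
    using assms by (auto intro!: mult_right_mono)
  show "summable (\<lambda>n. real m * x n)" using \<open>summable x\<close> by (rule summable_mult)
qed

lemma digit_sum_diff:
  assumes "\<And>i. x i \<ge> 0" and "summable x" and "\<And>i. e i \<le> m" and "\<And>i. e' i \<le> m"
  shows "digit_sum x e - digit_sum x e' = (\<Sum>i. (real (e i) - real (e' i)) * x i)"
  unfolding digit_sum_def
  using suminf_diff[OF summable_digits[OF assms(1,2,3)] summable_digits[OF assms(1,2,4)]]
  by (simp add: left_diff_distrib)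

lemma digit_sum_update:
  assumes "\<And>i. x i \<ge> 0" and "summable x" and "\<And>i. e i \<le> m"
  shows "digit_sum x (e(n := c)) = digit_sum x e + (real c - real (e n)) * x n"
proof -
  have "(\<lambda>i. real ((e(n := c)) i) * x i)
      = (\<lambda>i. real (e i) * x i + (if i = n then (real c - real (e n)) * x n else 0))"
    by (auto simp: fun_eq_iff algebra_simps)
  moreover have "(\<lambda>i. if i = n then (real c - real (e n)) * x n else 0) sums ((real c - real (e n)) * x n)"
    by (rule sums_single)
  ultimately show ?thesis
    unfolding digit_sum_def
    by (simp add: suminf_add[OF summable_digits[OF assms] sums_summable, symmetric] sums_unique[symmetric])
qed

lemma achievement_set_subset:
  assumes "\<And>i. x i \<ge> 0" and "summable x"
  shows "achievement_set m x \<subseteq> {0..real m * suminf x}"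
proof
  fix y assume "y \<in> achievement_set m x"
  then obtain e where e: "\<And>i. e i \<le> m" and y: "y = digit_sum x e"
    by (auto simp: achievement_set_iff)
  have "0 \<le> y"
    unfolding y digit_sum_def using summable_digits[OF assms e] assms by (intro suminf_nonneg) auto
  moreover have "y \<le> (\<Sum>i. real m * x i)"
    unfolding y digit_sum_def using summable_digits[OF assms e] assms e
    by (intro suminf_le) (auto intro!: mult_right_mono summable_mult)
  ultimately show "y \<in> {0..real m * suminf x}"
    using suminf_mult[OF \<open>summable x\<close>] by simp
qed

lemma achievement_set_reflect:
  assumes "\<And>i. x i \<ge> 0" and "summable x" and "y \<in> achievement_set m x"
  shows "real m * suminf x - y \<in> achievement_set m x"
proof -
  obtain e where e: "\<And>i. e i \<le> m" and y: "y = digit_sum x e"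
    using assms(3) by (auto simp: achievement_set_iff)
  have "digit_sum x (\<lambda>_. m) - digit_sum x e = digit_sum x (\<lambda>i. m - e i)"
    using digit_sum_diff[OF assms(1,2), of "\<lambda>_. m" m e] e by (simp add: digit_sum_def of_nat_diff)
  moreover have "digit_sum x (\<lambda>_. m) = real m * suminf x"
    unfolding digit_sum_def by (rule suminf_mult[OF \<open>summable x\<close>])
  ultimately show ?thesis
    unfolding achievement_set_iff y by (metis diff_le_self)
qed

lemma compact_achievement_set:
  fixes x :: "nat \<Rightarrow> real"
  assumes nonneg: "\<And>i. x i \<ge> 0" and "summable x"
  shows "compact (achievement_set m x)"
proof -
  define D :: "(nat \<Rightarrow> real) set" where "D = PiE UNIV (\<lambda>_. real ` {..m})"
  have "compact D"
    using compactin_PiE[of "\<lambda>_. euclidean" UNIV "\<lambda>_. real ` {..m}"]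
    by (simp add: D_def euclidean_product_topology finite_imp_compact)
  moreover have "continuous_on D (\<lambda>d. \<Sum>i. d i * x i)"
  proof (rule uniform_limit_theorem[OF _ Weierstrass_m_test])
    show "\<forall>\<^sub>F n in sequentially. continuous_on D (\<lambda>d. \<Sum>i<n. d i * x i)"
      by (intro always_eventually allI continuous_intros
          continuous_on_product_then_coordinatewise continuous_on_id)
    show "norm (d i * x i) \<le> real m * x i" if "d \<in> D" for d i
    proof -
      obtain k where "k \<le> m" "d i = real k" using \<open>d \<in> D\<close> by (auto simp: D_def)
      then show ?thesis using nonneg[of i] by (simp add: abs_mult mult_right_mono)
    qed
    show "summable (\<lambda>i. real m * x i)" using \<open>summable x\<close> by (rule summable_mult)
  qed simp
  ultimately have "compact ((\<lambda>d. \<Sum>i. d i * x i) ` D)"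
    by (metis compact_continuous_image)
  moreover have "D = (\<lambda>e i. real (e i)) ` {e. \<forall>i. e i \<le> m}"
  proof (intro equalityI subsetI)
    fix d :: "nat \<Rightarrow> real" assume "d \<in> D"
    then have "\<forall>i. \<exists>k\<le>m. d i = real k" by (auto simp: D_def)
    then obtain e where "\<forall>i. e i \<le> m \<and> d i = real (e i)" by metis
    then show "d \<in> (\<lambda>e i. real (e i)) ` {e. \<forall>i. e i \<le> m}" by (auto intro!: image_eqI[of _ _ e])
  qed (auto simp: D_def)
  ultimately show ?thesis by (simp add: achievement_set_def image_image setcompr_eq_image)
qed

lemma perfect_achievement_set:
  assumes pos: "\<And>i. x i > 0" and "summable x" and "m \<ge> 1"
  shows "perfect_set (achievement_set m x)"
  unfolding perfect_set_def
proof (intro conjI ballI)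
  have nonneg: "\<And>i. x i \<ge> 0" using pos less_imp_le by blast
  show "closed (achievement_set m x)"
    by (rule compact_imp_closed[OF compact_achievement_set[OF nonneg \<open>summable x\<close>]])
  fix y assume "y \<in> achievement_set m x"
  then obtain e where e: "\<And>i. e i \<le> m" and y: "y = digit_sum x e"
    by (auto simp: achievement_set_iff)
  show "y islimpt achievement_set m x"
    unfolding islimpt_approachable
  proof (intro allI impI)
    fix \<epsilon> :: real assume "\<epsilon> > 0"
    obtain n where n: "x n < \<epsilon>"
      using \<open>\<epsilon> > 0\<close> summable_LIMSEQ_zero[OF \<open>summable x\<close>] nonneg
      by (metis abs_of_nonneg real_norm_def LIMSEQ_D diff_zero le_refl)
    define c where "c = (if e n < m then e n + 1 else e n - 1)"
    have "c \<le> m" using e[of n] by (simp add: c_def)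
    then have e': "\<And>i. (e(n := c)) i \<le> m" by (simp add: e)
    have "\<bar>real c - real (e n)\<bar> = 1" using e[of n] \<open>m \<ge> 1\<close> by (auto simp: c_def)
    then have "\<bar>digit_sum x (e(n := c)) - y\<bar> = x n"
      using digit_sum_update[OF nonneg \<open>summable x\<close> e] y pos[of n] by (simp add: abs_mult)
    moreover have "digit_sum x (e(n := c)) \<in> achievement_set m x"
      using e' unfolding achievement_set_iff by blast
    ultimately show "\<exists>y'\<in>achievement_set m x. y' \<noteq> y \<and> dist y' y < \<epsilon>"
      using n pos[of n] by (intro bexI[of _ "digit_sum x (e(n := c))"]) (auto simp: dist_real_def)
  qed
qed

section \<open>Finite digit sums\<close>

lemma greedy_digit:
  fixes a t R :: real
  assumes "a > 0" and "0 \<le> t" and "t \<le> real m * a + R" and "a \<le> R"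
  obtains c where "c \<le> m" and "real c * a \<le> t" and "t - real c * a \<le> R"
proof -
  define c where "c = min m (nat \<lfloor>t / a\<rfloor>)"
  have "0 \<le> t / a" using assms by simp
  then have floor: "real (nat \<lfloor>t / a\<rfloor>) \<le> t / a" "t / a < real (nat \<lfloor>t / a\<rfloor>) + 1"
    by linarith+
  then have "real c \<le> t / a" by (simp add: c_def min_def)
  then have "real c * a \<le> t" using \<open>a > 0\<close> by (simp add: field_simps)
  moreover have "t - real c * a \<le> R"
  proof (cases "c = m")
    case True
    then show ?thesis using assms(3) by simp
  next
    case False
    then have "t / a < real c + 1" using floor by (simp add: c_def min_def split: if_splits)
    then have "t - real c * a < a" using \<open>a > 0\<close> by (simp add: field_simps)
    then show ?thesis using \<open>a \<le> R\<close> by simp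
  qed
  moreover have "c \<le> m" by (simp add: c_def)
  ultimately show thesis using that by blast
qed

lemma finite_digit_sums_approximate:
  fixes x :: "nat \<Rightarrow> real"
  assumes "finite A" and "w \<ge> 0"
    and "\<And>j. j \<in> A \<Longrightarrow> x j > 0"
    and "\<And>k. k \<in> A \<Longrightarrow> x k \<le> real m * (\<Sum>j\<in>{j\<in>A. x j < x k}. x j) + w"
    and "0 \<le> t" and "t \<le> real m * sum x A + w"
  shows "\<exists>c. (\<forall>i. c i \<le> m) \<and> (\<Sum>i\<in>A. real (c i) * x i) \<le> t
    \<and> t \<le> (\<Sum>i\<in>A. real (c i) * x i) + w"
  using assms(1,3-)
proof (induction A arbitrary: t rule: finite_ranking_induct[where f = x])
  case empty
  then show ?case by (intro exI[of _ "\<lambda>_. 0"]) auto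
next
  case (insert k A)
  show ?case
  proof (cases "k \<in> A")
    case True
    then show ?thesis using insert by (simp add: insert_absorb)
  next
    case False
    have pos: "\<And>j. j \<in> A \<Longrightarrow> x j > 0" using insert.prems(1) by auto
    have kakeya: "x k' \<le> real m * (\<Sum>j\<in>{j\<in>A. x j < x k'}. x j) + w" if "k' \<in> A" for k'
    proof -
      have "{j\<in>insert k A. x j < x k'} = {j\<in>A. x j < x k'}"
        using insert.hyps(2)[OF that] by auto
      then show ?thesis using insert.prems(2)[of k'] that by simp
    qed
    have "(\<Sum>j\<in>{j\<in>insert k A. x j < x k}. x j) \<le> sum x A"
      using insert.hyps(1) pos by (intro sum_mono2) (auto intro: less_imp_le)
    then have "real m * (\<Sum>j\<in>{j\<in>insert k A. x j < x k}. x j) \<le> real m * sum x A"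
      by (rule mult_left_mono) simp
    then have "x k \<le> real m * sum x A + w" using insert.prems(2)[of k] by simp
    moreover have "t \<le> real m * x k + (real m * sum x A + w)"
      using insert.prems(4) insert.hyps(1) False by (simp add: algebra_simps)
    \<comment> \<open>k carries the largest term, so it takes the greedy digit\<close>
    ultimately obtain c where c: "c \<le> m" "real c * x k \<le> t" "t - real c * x k \<le> real m * sum x A + w"
      using greedy_digit[of "x k" t] insert.prems(1,3) by auto
    then obtain d where d: "\<forall>i. d i \<le> m" "(\<Sum>i\<in>A. real (d i) * x i) \<le> t - real c * x k"
        "t - real c * x k \<le> (\<Sum>i\<in>A. real (d i) * x i) + w"
      using insert.IH[of "t - real c * x k"] pos kakeya c by auto
    have "(\<Sum>i\<in>A. real ((d(k := c)) i) * x i) = (\<Sum>i\<in>A. real (d i) * x i)"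
      using False by (intro sum.cong) auto
    then have "(\<Sum>i\<in>insert k A. real ((d(k := c)) i) * x i) = real c * x k + (\<Sum>i\<in>A. real (d i) * x i)"
      using insert.hyps(1) False by simp
    then show ?thesis using c(1) d by (intro exI[of _ "d(k := c)"]) auto
  qed
qed

lemma interior_finite_Union_empty:
  assumes "finite \<A>" and "\<And>A. A \<in> \<A> \<Longrightarrow> closed A" and "\<And>A. A \<in> \<A> \<Longrightarrow> interior A = {}"
  shows "interior (\<Union>\<A>) = {}"
  using assms
proof (induction \<A> rule: finite_induct)
  case (insert A \<A>)
  then have "interior (\<Union>\<A> \<union> A) = interior (\<Union>\<A>)"
    by (intro interior_closed_Un_empty_interior closed_Union) auto
  then show ?case using insert by (simp add: Un_commute)
qed simp

lemma finite_union_of_intervals_translates: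
  assumes "finite F" and "F \<noteq> {}" and "L > 0"
  shows "is_finite_union_of_intervals (\<Union>f\<in>F. {f..f + L})"
proof -
  obtain n :: nat and g where F: "F = g ` {i. i < n}"
    using finite_imp_nat_seg_image_inj_on[OF \<open>finite F\<close>] by blast
  then have "n \<ge> 1" using \<open>F \<noteq> {}\<close> by (auto intro: Suc_leI)
  then show ?thesis
    unfolding is_finite_union_of_intervals_def F using \<open>L > 0\<close>
    by (intro exI[of _ n] exI[of _ g] exI[of _ "\<lambda>i. g i + L"]) (auto simp: lessThan_def)
qed

lemma suminf_restrict_finite:
  fixes f :: "nat \<Rightarrow> 'a::{t2_space,comm_monoid_add}"
  shows "finite A \<Longrightarrow> (\<Sum>j. if j \<in> A then f j else 0) = sum f A"
  using suminf_finite[of A "\<lambda>j. if j \<in> A then f j else 0"] by simp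

lemma positive_digit_differences_bounded_below:
  fixes x :: "nat \<Rightarrow> real"
  assumes "finite L"
  obtains \<eta> where "\<eta> > 0"
    "\<And>c c'. \<forall>i. c i \<le> m \<Longrightarrow> \<forall>i. c' i \<le> m \<Longrightarrow> 0 < (\<Sum>i\<in>L. (real (c i) - real (c' i)) * x i) \<Longrightarrow>
      \<eta> \<le> (\<Sum>i\<in>L. (real (c i) - real (c' i)) * x i)"
proof -
  let ?C = "PiE L (\<lambda>_. {..m})"
  let ?v = "\<lambda>(c, c'). \<Sum>i\<in>L. (real (c i) - real (c' i)) * x i"
  define \<eta> where "\<eta> = Min (insert 1 {v \<in> ?v ` (?C \<times> ?C). v > 0})"
  have "finite (?v ` (?C \<times> ?C))" using assms by (intro finite_imageI finite_cartesian_product finite_PiE) auto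
  then have fin: "finite (insert 1 {v \<in> ?v ` (?C \<times> ?C). v > 0})" by simp
  show thesis
  proof
    show "\<eta> > 0" using fin by (simp add: \<eta>_def Min_gr_iff)
    fix c c' :: "nat \<Rightarrow> nat" assume "\<forall>i. c i \<le> m" "\<forall>i. c' i \<le> m"
      and v_pos: "0 < (\<Sum>i\<in>L. (real (c i) - real (c' i)) * x i)"
    then have "(restrict c L, restrict c' L) \<in> ?C \<times> ?C" by auto
    moreover have "?v (restrict c L, restrict c' L) = (\<Sum>i\<in>L. (real (c i) - real (c' i)) * x i)" by simp
    ultimately have "(\<Sum>i\<in>L. (real (c i) - real (c' i)) * x i) \<in> ?v ` (?C \<times> ?C)"
      by (metis (no_types, lifting) image_eqI)
    then show "\<eta> \<le> (\<Sum>i\<in>L. (real (c i) - real (c' i)) * x i)"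
      unfolding \<eta>_def using fin v_pos by (intro Min_le) auto
  qed
qed

section \<open>Gaps of closed subsets of the line\<close>

lemma connected_subset_between:
  fixes C :: "real set"
  assumes "connected C" and "z \<in> C" and "l < z" and "z < r" and "l \<notin> C" and "r \<notin> C"
  shows "C \<subseteq> {l<..<r}"
proof
  fix y assume "y \<in> C"
  have "\<not> y \<le> l" using connected_iff_interval[of C] assms \<open>y \<in> C\<close> by (meson less_imp_le)
  moreover have "\<not> r \<le> y" using connected_iff_interval[of C] assms \<open>y \<in> C\<close> by (meson less_imp_le)
  ultimately show "y \<in> {l<..<r}" by simp
qed

lemma gap_between:
  assumes "l \<in> K" and "r \<in> K" and "l < z" and "z < r" and "z \<notin> K"
  shows "\<exists>G. is_gap K G \<and> G \<subseteq> {l<..<r}"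
proof -
  let ?G = "connected_component_set (- K) z"
  have "?G \<subseteq> {l<..<r}"
    using assms by (intro connected_subset_between[of _ z]) (auto dest: connected_component_in)
  then show ?thesis
    unfolding is_gap_def using assms(5) by (blast intro: bounded_subset[OF bounded_Ioo])
qed

lemma interval_between:
  assumes "l \<notin> K" and "r \<notin> K" and "l < p" and "p < q" and "q < r" and "{p..q} \<subseteq> K"
  shows "\<exists>I. is_interval_of K I \<and> I \<subseteq> {l<..<r}"
proof -
  let ?I = "connected_component_set K p"
  have pq: "{p..q} \<subseteq> ?I" using assms by (intro connected_component_maximal) auto
  then have "?I \<subseteq> {l<..<r}"
    using assms by (intro connected_subset_between[of _ p]) (auto dest: connected_component_in)
  moreover have "is_interval_of K ?I"
    unfolding is_interval_of_def using pq assms by (metis atLeastAtMost_iff less_eq_real_def order_less_irrefl subsetD)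
  ultimately show ?thesis by blast
qed

lemma acc_left_if_intervals_accumulate:
  assumes "a \<in> K"
    and intervals: "\<And>\<epsilon>. \<epsilon> > 0 \<Longrightarrow> \<exists>p q. p < q \<and> {p..q} \<subseteq> K \<and> a - \<epsilon> < p \<and> q < a"
    and not_full: "\<And>\<delta>. \<delta> > 0 \<Longrightarrow> \<not> {a - \<delta>..a} \<subseteq> K"
  shows "acc_left K a"
  unfolding acc_left_def
proof (intro allI impI conjI)
  fix \<epsilon> :: real assume "\<epsilon> > 0"
  obtain p q where pq: "p < q" "{p..q} \<subseteq> K" "a - \<epsilon> < p" "q < a"
    using intervals[OF \<open>\<epsilon> > 0\<close>] by blast
  obtain z where z: "q < z" "z < a" "z \<notin> K"
    using not_full[of "a - q"] pq \<open>a \<in> K\<close> by (auto simp: subset_iff less_le)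
  have "q \<in> K" using pq(1,2) by auto
  then obtain G where "is_gap K G" "G \<subseteq> {q<..<a}" using gap_between[of q K a z] z \<open>a \<in> K\<close> by blast
  then show "\<exists>G. is_gap K G \<and> G \<subseteq> {a - \<epsilon><..<a}" using pq by (intro exI[of _ G]) auto
  obtain p' q' where pq': "p' < q'" "{p'..q'} \<subseteq> K" "z < p'" "q' < a"
    using intervals[of "a - z"] z by auto
  obtain r where r: "q' < r" "r < a" "r \<notin> K"
    using not_full[of "a - q'"] pq' \<open>a \<in> K\<close> by (auto simp: subset_iff less_le)
  show "\<exists>I. is_interval_of K I \<and> I \<subseteq> {a - \<epsilon><..<a}"
    using interval_between[of z K r p' q'] pq pq' z r by fastforce
qed

lemma acc_right_if_intervals_accumulate:
  assumes "b \<in> K"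
    and intervals: "\<And>\<epsilon>. \<epsilon> > 0 \<Longrightarrow> \<exists>p q. p < q \<and> {p..q} \<subseteq> K \<and> b < p \<and> q < b + \<epsilon>"
    and not_full: "\<And>\<delta>. \<delta> > 0 \<Longrightarrow> \<not> {b..b + \<delta>} \<subseteq> K"
  shows "acc_right K b"
  unfolding acc_right_def
proof (intro allI impI conjI)
  fix \<epsilon> :: real assume "\<epsilon> > 0"
  obtain p q where pq: "p < q" "{p..q} \<subseteq> K" "b < p" "q < b + \<epsilon>"
    using intervals[OF \<open>\<epsilon> > 0\<close>] by blast
  obtain z where z: "b < z" "z < p" "z \<notin> K"
    using not_full[of "p - b"] pq \<open>b \<in> K\<close> by (auto simp: subset_iff less_le)
  have "p \<in> K" using pq(1,2) by auto
  then obtain G where "is_gap K G" "G \<subseteq> {b<..<p}" using gap_between[of b K p z] z \<open>b \<in> K\<close> by blast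
  then show "\<exists>G. is_gap K G \<and> G \<subseteq> {b<..<b + \<epsilon>}" using pq by (intro exI[of _ G]) auto
  obtain p' q' where pq': "p' < q'" "{p'..q'} \<subseteq> K" "b < p'" "q' < z"
    using intervals[of "z - b"] z by auto
  obtain r where r: "b < r" "r < p'" "r \<notin> K"
    using not_full[of "p' - b"] pq' \<open>b \<in> K\<close> by (auto simp: subset_iff less_le)
  show "\<exists>I. is_interval_of K I \<and> I \<subseteq> {b<..<b + \<epsilon>}"
    using interval_between[of r K z p' q'] pq pq' z r by fastforce
qed

lemma gap_endpoints:
  fixes K :: "real set"
  assumes "closed K" and "is_gap K G"
  shows "Inf G \<in> K" and "Sup G \<in> K" and "Inf G < Sup G" and "\<And>y. Inf G < y \<Longrightarrow> y < Sup G \<Longrightarrow> y \<notin> K"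
proof -
  obtain z where "z \<notin> K" and G: "G = connected_component_set (- K) z" and "bounded G"
    using assms(2) unfolding is_gap_def by blast
  have "z \<in> G" "G \<subseteq> - K" "connected G" using \<open>z \<notin> K\<close> G connected_component_subset by auto
  have "open G" using G \<open>closed K\<close> by (simp add: open_connected_component open_Compl)
  obtain B where B: "\<And>y. y \<in> G \<Longrightarrow> \<bar>y\<bar> \<le> B" using \<open>bounded G\<close> by (auto simp: bounded_real)
  have bdd: "bdd_below G" "bdd_above G"
    using \<open>bounded G\<close> by (auto intro: bounded_imp_bdd_below bounded_imp_bdd_above)
  have notin: "Inf G \<notin> G" "Sup G \<notin> G"
    using Inf_notin_open[OF \<open>open G\<close>, of "- B - 1"] Sup_notin_open[OF \<open>open G\<close>, of "B + 1"] B
    by (force simp: abs_le_iff)+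
  \<comment> \<open>a ball around y missing K meets G, hence lies in the same component\<close>
  have absorb: "y \<in> G" if "y \<in> closure G" and "y \<notin> K" for y
  proof -
    obtain r where "r > 0" and ball: "ball y r \<subseteq> - K"
      using \<open>y \<notin> K\<close> \<open>closed K\<close> by (metis ComplI open_Compl open_contains_ball)
    then obtain w where "w \<in> G" "w \<in> ball y r"
      using \<open>y \<in> closure G\<close> unfolding closure_approachable by (auto simp: dist_commute)
    then have "ball y r \<subseteq> connected_component_set (- K) w"
      using ball by (intro connected_component_maximal) auto
    also have "\<dots> = G" using G \<open>w \<in> G\<close> connected_component_eq by blast
    finally show ?thesis using \<open>r > 0\<close> by auto
  qed
  show "Inf G \<in> K" "Sup G \<in> K"
    using absorb[OF closure_contains_Inf] absorb[OF closure_contains_Sup] \<open>z \<in> G\<close> bdd notin by blast+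
  show "Inf G < Sup G"
    using cInf_lower[OF \<open>z \<in> G\<close> bdd(1)] cSup_upper[OF \<open>z \<in> G\<close> bdd(2)] notin \<open>z \<in> G\<close>
    by (metis order_le_less order_less_trans)
  fix y assume "Inf G < y" "y < Sup G"
  then obtain g1 g2 where "g1 \<in> G" "g1 < y" "g2 \<in> G" "y < g2"
    using cInf_less_iff[OF _ bdd(1)] less_cSup_iff[OF _ bdd(2)] \<open>z \<in> G\<close> by blast
  then have "y \<in> G" using \<open>connected G\<close> connected_iff_interval by (meson less_imp_le)
  then show "y \<notin> K" using \<open>G \<subseteq> - K\<close> by auto
qed

section \<open>Small terms and gaps of an achievement set\<close>

locale achievement =
  fixes x :: "nat \<Rightarrow> real" and m :: nat
  assumes pos: "\<And>i. x i > 0" and summable: "summable x" and m_pos: "m \<ge> 1"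
begin

abbreviation E :: "real set" where "E \<equiv> achievement_set m x"

lemma nonneg: "x i \<ge> 0"
  using pos[of i] by simp

lemma finite_terms_ge:
  assumes "\<sigma> > 0"
  shows "finite {i. \<sigma> \<le> x i}"
proof -
  obtain N where "\<And>i. i \<ge> N \<Longrightarrow> norm (x i - 0) < \<sigma>"
    using LIMSEQ_D[OF summable_LIMSEQ_zero[OF summable] assms] by blast
  then have "{i. \<sigma> \<le> x i} \<subseteq> {..<N}" using nonneg by (force simp: not_less[symmetric])
  then show ?thesis by (rule finite_subset) simp
qed

definition small_terms :: "real \<Rightarrow> nat \<Rightarrow> real" where
  "small_terms \<sigma> i = (if x i \<le> \<sigma> then x i else 0)"

definition small_sum :: "real \<Rightarrow> real" where
  "small_sum \<sigma> = suminf (small_terms \<sigma>)"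

definition small_set :: "real \<Rightarrow> real set" where
  "small_set \<sigma> = achievement_set m (small_terms \<sigma>)"

definition large_sums :: "real \<Rightarrow> real set" where
  "large_sums \<sigma> = (\<lambda>c. \<Sum>i | \<sigma> < x i. real (c i) * x i) ` PiE {i. \<sigma> < x i} (\<lambda>_. {..m})"

definition sum_below :: "real \<Rightarrow> real" where
  "sum_below t = (\<Sum>j. if x j < t then x j else 0)"

lemma small_terms_nonneg: "small_terms \<sigma> i \<ge> 0"
  using nonneg by (simp add: small_terms_def)

lemma summable_small_terms: "summable (small_terms \<sigma>)"
  by (rule summable_comparison_test[OF _ summable]) (auto simp: small_terms_def nonneg)

lemma summable_below: "summable (\<lambda>j. if x j < t then x j else 0)"
  by (rule summable_comparison_test[OF _ summable]) (auto simp: nonneg)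

lemma finite_large_indices: "\<sigma> > 0 \<Longrightarrow> finite {i. \<sigma> < x i}"
  using finite_terms_ge by (rule finite_subset[rotated]) auto

lemma finite_large_sums: "\<sigma> > 0 \<Longrightarrow> finite (large_sums \<sigma>)"
  unfolding large_sums_def by (intro finite_imageI finite_PiE finite_large_indices) auto

lemma small_sum_nonneg: "small_sum \<sigma> \<ge> 0"
  unfolding small_sum_def by (intro suminf_nonneg summable_small_terms small_terms_nonneg)

lemma small_set_subset: "small_set \<sigma> \<subseteq> {0..real m * small_sum \<sigma>}"
  unfolding small_set_def small_sum_def
  by (rule achievement_set_subset[OF small_terms_nonneg summable_small_terms])

lemma closed_small_set: "closed (small_set \<sigma>)"
  unfolding small_set_def
  by (rule compact_imp_closed[OF compact_achievement_set[OF small_terms_nonneg summable_small_terms]])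

lemma small_sum_split:
  assumes "0 < \<delta>" and "\<delta> \<le> s"
  shows "small_sum s = sum x {j. \<delta> < x j \<and> x j \<le> s} + small_sum \<delta>"
proof -
  define A where "A = {j. \<delta> < x j \<and> x j \<le> s}"
  have A: "finite A"
    using finite_large_indices[OF \<open>0 < \<delta>\<close>] by (rule finite_subset[rotated]) (auto simp: A_def)
  have "small_sum s = (\<Sum>j. (if j \<in> A then x j else 0) + small_terms \<delta> j)"
    unfolding small_sum_def by (rule suminf_cong) (use assms in \<open>auto simp: small_terms_def A_def\<close>)
  also have "\<dots> = (\<Sum>j. if j \<in> A then x j else 0) + small_sum \<delta>"
    unfolding small_sum_def by (intro suminf_add[symmetric] summable_finite[OF A] summable_small_terms) auto
  also have "(\<Sum>j. if j \<in> A then x j else 0) = sum x A" by (rule suminf_restrict_finite[OF A])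
  finally show ?thesis by (simp add: A_def)
qed

lemma sum_below_le:
  assumes "0 < \<delta>"
  shows "sum_below t \<le> sum x {j. \<delta> < x j \<and> x j < t} + small_sum \<delta>"
proof -
  define A where "A = {j. \<delta> < x j \<and> x j < t}"
  have A: "finite A"
    using finite_large_indices[OF \<open>0 < \<delta>\<close>] by (rule finite_subset[rotated]) (auto simp: A_def)
  have "sum_below t \<le> (\<Sum>j. (if j \<in> A then x j else 0) + small_terms \<delta> j)"
    unfolding sum_below_def
    by (intro suminf_le summable_below summable_add summable_finite[OF A] summable_small_terms)
      (auto simp: small_terms_def nonneg A_def)
  also have "\<dots> = (\<Sum>j. if j \<in> A then x j else 0) + small_sum \<delta>"
    unfolding small_sum_def by (intro suminf_add[symmetric] summable_finite[OF A] summable_small_terms) auto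
  also have "(\<Sum>j. if j \<in> A then x j else 0) = sum x A" by (rule suminf_restrict_finite[OF A])
  finally show ?thesis by (simp add: A_def)
qed

lemma small_sum_arbitrarily_small:
  assumes "\<epsilon> > 0" and "b > 0"
  obtains \<sigma> where "\<sigma> > 0" "\<sigma> \<le> b" "real m * small_sum \<sigma> < \<epsilon>"
proof -
  have m: "real m > 0" using m_pos by simp
  obtain N where N: "\<bar>\<Sum>i. x (i + N)\<bar> < \<epsilon> / real m"
    using suminf_exist_split[OF _ summable, of "\<epsilon> / real m"] assms m by auto
  define M where "M = Min (insert 1 (x ` {..<N}))"
  have M: "M > 0" "\<And>i. i < N \<Longrightarrow> M \<le> x i"
    using pos by (auto simp: M_def Min_gr_iff)
  define \<sigma> where "\<sigma> = min b M / 2"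
  have "min b M \<le> M" "min b M \<le> b" "min b M > 0" using M \<open>b > 0\<close> by auto
  then have \<sigma>: "\<sigma> > 0" "\<sigma> \<le> b" "\<sigma> < M" unfolding \<sigma>_def by linarith+
  have "small_terms \<sigma> i = 0" if "i < N" for i
    using M(2)[OF that] \<sigma>(3) by (simp add: small_terms_def)
  then have "small_sum \<sigma> = (\<Sum>i. small_terms \<sigma> (i + N))"
    unfolding small_sum_def using suminf_split_initial_segment[OF summable_small_terms, of \<sigma> N] by simp
  also have "\<dots> \<le> (\<Sum>i. x (i + N))"
    by (intro suminf_le summable_ignore_initial_segment summable summable_small_terms)
      (auto simp: small_terms_def nonneg)
  also have "\<dots> < \<epsilon> / real m" using N by linarith
  finally have "real m * small_sum \<sigma> < \<epsilon>"
    using m by (simp add: field_simps)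
  then show thesis using \<sigma>(1,2) by (intro that)
qed

lemma digit_sum_split:
  assumes "\<sigma> > 0" and e: "\<And>i. e i \<le> m"
  shows "digit_sum x e = (\<Sum>i | \<sigma> < x i. real (e i) * x i) + digit_sum (small_terms \<sigma>) e"
proof -
  let ?L = "{i. \<sigma> < x i}"
  have "digit_sum x e = (\<Sum>i. (if i \<in> ?L then real (e i) * x i else 0) + real (e i) * small_terms \<sigma> i)"
    unfolding digit_sum_def by (rule suminf_cong) (auto simp: small_terms_def)
  also have "\<dots> = (\<Sum>i. if i \<in> ?L then real (e i) * x i else 0) + digit_sum (small_terms \<sigma>) e"
    unfolding digit_sum_def
    by (intro suminf_add[symmetric] summable_finite[OF finite_large_indices[OF \<open>\<sigma> > 0\<close>]]
        summable_digits[OF small_terms_nonneg summable_small_terms e]) auto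
  also have "(\<Sum>i. if i \<in> ?L then real (e i) * x i else 0) = (\<Sum>i\<in>?L. real (e i) * x i)"
    by (rule suminf_restrict_finite[OF finite_large_indices[OF \<open>\<sigma> > 0\<close>]])
  finally show ?thesis by simp
qed

lemma achievement_set_decomp:
  assumes "\<sigma> > 0"
  shows "E = (\<Union>f\<in>large_sums \<sigma>. (+) f ` small_set \<sigma>)"
proof (intro equalityI subsetI)
  fix y assume "y \<in> E"
  then obtain e where e: "\<And>i. e i \<le> m" and y: "y = digit_sum x e"
    by (auto simp: achievement_set_iff)
  have large: "(\<Sum>i | \<sigma> < x i. real (e i) * x i) \<in> large_sums \<sigma>"
    unfolding large_sums_def using e by (intro image_eqI[of _ _ "restrict e {i. \<sigma> < x i}"]) auto
  have small: "digit_sum (small_terms \<sigma>) e \<in> small_set \<sigma>"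
    unfolding small_set_def achievement_set_iff using e by blast
  show "y \<in> (\<Union>f\<in>large_sums \<sigma>. (+) f ` small_set \<sigma>)"
    unfolding y digit_sum_split[OF assms e] by (rule UN_I[OF large imageI[OF small]])
next
  fix y assume "y \<in> (\<Union>f\<in>large_sums \<sigma>. (+) f ` small_set \<sigma>)"
  then obtain f t where f: "f \<in> large_sums \<sigma>" and t: "t \<in> small_set \<sigma>" and y: "y = f + t"
    by blast
  obtain c where c: "c \<in> PiE {i. \<sigma> < x i} (\<lambda>_. {..m})" and f: "f = (\<Sum>i | \<sigma> < x i. real (c i) * x i)"
    using f unfolding large_sums_def by blast
  obtain c' where c': "\<And>i. c' i \<le> m" and t: "t = digit_sum (small_terms \<sigma>) c'"
    using t unfolding small_set_def achievement_set_iff by blast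
  define e where "e i = (if \<sigma> < x i then c i else c' i)" for i
  have e: "\<And>i. e i \<le> m" using c c' by (auto simp: e_def)
  have "digit_sum (small_terms \<sigma>) e = digit_sum (small_terms \<sigma>) c'"
    unfolding digit_sum_def by (rule suminf_cong) (auto simp: e_def small_terms_def)
  moreover have "(\<Sum>i | \<sigma> < x i. real (e i) * x i) = (\<Sum>i | \<sigma> < x i. real (c i) * x i)"
    by (simp add: e_def)
  ultimately have "y = digit_sum x e"
    unfolding digit_sum_split[OF assms e] y f t by simp
  then show "y \<in> E" using e unfolding achievement_set_iff by blast
qed

lemma interior_small_set:
  assumes "\<sigma> > 0" and "interior E \<noteq> {}"
  shows "interior (small_set \<sigma>) \<noteq> {}"
proof
  assume empty: "interior (small_set \<sigma>) = {}"
  have "interior (\<Union>f\<in>large_sums \<sigma>. (+) f ` small_set \<sigma>) = {}"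
    using finite_large_sums[OF \<open>\<sigma> > 0\<close>] empty closed_small_set
    by (intro interior_finite_Union_empty) (auto simp: interior_translation closed_translation)
  then show False using assms achievement_set_decomp by simp
qed

lemma digit_forced_max:
  assumes e: "\<And>i. e i \<le> m" and "digit_sum x e + x j \<notin> E"
  shows "e j = m"
proof (rule ccontr)
  assume "e j \<noteq> m"
  then have "e j < m" using e[of j] by simp
  then have "\<And>i. (e(j := e j + 1)) i \<le> m" by (simp add: e)
  moreover have "digit_sum x (e(j := e j + 1)) = digit_sum x e + x j"
    using digit_sum_update[OF nonneg summable e] by simp
  ultimately show False using assms(2) unfolding achievement_set_iff by metis
qed

lemma subtract_small_set:
  assumes e: "\<And>i. e i \<le> m" and e_max: "\<And>i. x i \<le> \<sigma> \<Longrightarrow> e i = m" and "t \<in> small_set \<sigma>"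
  shows "digit_sum x e - t \<in> E"
proof -
  obtain c where c: "\<And>i. c i \<le> m" and t: "t = digit_sum (small_terms \<sigma>) c"
    using \<open>t \<in> small_set \<sigma>\<close> by (auto simp: small_set_def achievement_set_iff)
  \<comment> \<open>lower the maximal digits of e at the small terms by the digits of t\<close>
  define e' where "e' i = (if x i \<le> \<sigma> then m - c i else e i)" for i
  have "digit_sum x e' = (\<Sum>i. real (e i) * x i - real (c i) * small_terms \<sigma> i)"
    unfolding digit_sum_def
    by (rule suminf_cong) (use c e_max in \<open>auto simp: e'_def small_terms_def of_nat_diff algebra_simps\<close>)
  also have "\<dots> = digit_sum x e - t"
    unfolding t digit_sum_def
    by (rule suminf_diff[symmetric, OF summable_digits[OF nonneg summable e]
          summable_digits[OF small_terms_nonneg summable_small_terms c]])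
  finally show ?thesis
    unfolding achievement_set_iff by (metis diff_le_self e e'_def)
qed

lemma sum_in_small_set:
  assumes "finite A" and "\<And>j. j \<in> A \<Longrightarrow> x j \<le> s" and "\<forall>i. c i \<le> m"
  shows "(\<Sum>i\<in>A. real (c i) * x i) \<in> small_set s"
proof -
  define c' where "c' i = (if i \<in> A then c i else 0)" for i
  have "digit_sum (small_terms s) c' = (\<Sum>i\<in>A. real (c i) * x i)"
    unfolding digit_sum_def
    by (subst suminf_finite[OF \<open>finite A\<close>]) (use assms(2) in \<open>auto simp: c'_def small_terms_def\<close>)
  moreover have "\<forall>i. c' i \<le> m" using assms(3) by (simp add: c'_def)
  ultimately show ?thesis unfolding small_set_def achievement_set_iff by metis
qed

lemma small_set_dense_in_interval:
  assumes "s > 0" and kakeya: "\<And>k. x k \<le> s \<Longrightarrow> x k \<le> real m * sum_below (x k)"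
    and t: "t \<in> {0..real m * small_sum s}" and "\<epsilon> > 0"
  shows "\<exists>y\<in>small_set s. dist y t < \<epsilon>"
proof -
  obtain \<delta> where \<delta>: "\<delta> > 0" "\<delta> \<le> s" "real m * small_sum \<delta> < \<epsilon>"
    using small_sum_arbitrarily_small[OF \<open>\<epsilon> > 0\<close> \<open>s > 0\<close>] by blast
  define A where "A = {j. \<delta> < x j \<and> x j \<le> s}"
  have A: "finite A" using finite_large_indices[OF \<open>\<delta> > 0\<close>] by (rule finite_subset[rotated]) (auto simp: A_def)
  have kakeya_A: "x k \<le> real m * (\<Sum>j\<in>{j\<in>A. x j < x k}. x j) + real m * small_sum \<delta>"
    if "k \<in> A" for k
  proof -
    have "{j\<in>A. x j < x k} = {j. \<delta> < x j \<and> x j < x k}" using that by (auto simp: A_def)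
    then have "sum_below (x k) \<le> (\<Sum>j\<in>{j\<in>A. x j < x k}. x j) + small_sum \<delta>"
      using sum_below_le[OF \<open>\<delta> > 0\<close>] by simp
    then have "real m * sum_below (x k) \<le> real m * ((\<Sum>j\<in>{j\<in>A. x j < x k}. x j) + small_sum \<delta>)"
      by (rule mult_left_mono) simp
    then show ?thesis using kakeya[of k] that by (simp add: A_def distrib_left)
  qed
  have "t \<le> real m * sum x A + real m * small_sum \<delta>"
    using t small_sum_split[OF \<delta>(1,2)] by (simp add: A_def distrib_left)
  moreover have "real m * small_sum \<delta> \<ge> 0" "\<And>j. j \<in> A \<Longrightarrow> x j > 0" "0 \<le> t"
    using small_sum_nonneg pos t by auto
  ultimately obtain c where c: "\<forall>i. c i \<le> m" "(\<Sum>i\<in>A. real (c i) * x i) \<le> t"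
      "t \<le> (\<Sum>i\<in>A. real (c i) * x i) + real m * small_sum \<delta>"
    using finite_digit_sums_approximate[OF A _ _ kakeya_A] by blast
  moreover have "(\<Sum>i\<in>A. real (c i) * x i) \<in> small_set s"
    using A c(1) by (intro sum_in_small_set) (auto simp: A_def)
  ultimately show ?thesis using \<delta>(3) by (intro bexI) (auto simp: dist_real_def)
qed

lemma small_set_eq_interval:
  assumes "s > 0" and "\<And>k. x k \<le> s \<Longrightarrow> x k \<le> real m * sum_below (x k)"
  shows "small_set s = {0..real m * small_sum s}"
proof (intro antisym small_set_subset subsetI)
  fix t assume "t \<in> {0..real m * small_sum s}"
  then have "t \<in> closure (small_set s)"
    unfolding closure_approachable using small_set_dense_in_interval[OF assms] by blast
  then show "t \<in> small_set s" by (simp add: closed_small_set closure_closed)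
qed

lemma finite_union_of_intervals_if_small_set_interval:
  assumes "s > 0" and small: "small_set s = {0..real m * small_sum s}"
  shows "is_finite_union_of_intervals E"
proof -
  obtain i where "x i < s"
    using finite_terms_ge[OF \<open>s > 0\<close>] by (metis (mono_tags) infinite_UNIV_nat mem_Collect_eq not_le finite_subset subsetI)
  then have "x i \<le> small_sum s"
    using sum_le_suminf[OF summable_small_terms, of "{i}" s] small_terms_nonneg
    by (auto simp: small_terms_def small_sum_def)
  then have "real m * small_sum s > 0" using pos[of i] m_pos by simp
  moreover have "large_sums s \<noteq> {}" unfolding large_sums_def by (auto simp: PiE_eq_empty_iff)
  ultimately have "is_finite_union_of_intervals (\<Union>f\<in>large_sums s. {f..f + real m * small_sum s})"
    by (intro finite_union_of_intervals_translates finite_large_sums[OF \<open>s > 0\<close>])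
  then show ?thesis
    using achievement_set_decomp[OF \<open>s > 0\<close>] by (simp add: small image_add_atLeastAtMost add.commute)
qed

lemma intervals_left_of_gap:
  assumes "a \<in> E" and "u > 0" and gap: "\<And>y. y \<in> E \<Longrightarrow> \<not> (a < y \<and> y < a + u)"
    and "interior E \<noteq> {}" and "\<epsilon> > 0"
  shows "\<exists>p q. p < q \<and> {p..q} \<subseteq> E \<and> a - \<epsilon> < p \<and> q < a"
proof -
  obtain e where e: "\<And>i. e i \<le> m" and a: "a = digit_sum x e"
    using \<open>a \<in> E\<close> by (auto simp: achievement_set_iff)
  obtain \<sigma> where \<sigma>: "\<sigma> > 0" "\<sigma> \<le> u / 2" "real m * small_sum \<sigma> < \<epsilon>"
    using small_sum_arbitrarily_small[OF \<open>\<epsilon> > 0\<close>, of "u / 2"] \<open>u > 0\<close> by auto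
  have e_max: "e i = m" if "x i \<le> \<sigma>" for i
  proof (rule digit_forced_max[OF e])
    show "digit_sum x e + x i \<notin> E"
      using gap[of "a + x i"] pos[of i] that \<sigma>(2) a by auto
  qed
  obtain y0 r where "r > 0" and ball: "ball y0 r \<subseteq> small_set \<sigma>"
    using interior_small_set[OF \<sigma>(1) \<open>interior E \<noteq> {}\<close>] by (auto simp: mem_interior)
  then have "y0 - 3/4 * r \<in> small_set \<sigma>" "y0 + 3/4 * r \<in> small_set \<sigma>"
    by (auto simp: dist_real_def)
  then have bounds: "0 \<le> y0 - 3/4 * r" "y0 + 3/4 * r \<le> real m * small_sum \<sigma>"
    using small_set_subset[of \<sigma>] by auto
  have "{a - (y0 + r/2)..a - (y0 - r/2)} \<subseteq> E"
  proof
    fix z assume "z \<in> {a - (y0 + r/2)..a - (y0 - r/2)}"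
    then have "a - z \<in> small_set \<sigma>" using ball \<open>r > 0\<close> by (auto simp: dist_real_def subset_iff)
    then show "z \<in> E" using subtract_small_set[where e = e and \<sigma> = \<sigma> and t = "a - z", OF e e_max] a by simp
  qed
  then show ?thesis using \<open>r > 0\<close> bounds \<sigma>(3)
    by (intro exI[of _ "a - (y0 + r/2)"] exI[of _ "a - (y0 - r/2)"]) auto
qed

lemma digit_sum_diff_split:
  assumes "\<tau> > 0" and e: "\<And>i. e i \<le> m" and e': "\<And>i. e' i \<le> m"
  shows "digit_sum x e - digit_sum x e' = (\<Sum>i | \<tau> < x i. (real (e i) - real (e' i)) * x i)
    + (\<Sum>i. (real (e i) - real (e' i)) * small_terms \<tau> i)"
proof -
  have "(\<Sum>i. (real (e i) - real (e' i)) * small_terms \<tau> i)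
      = digit_sum (small_terms \<tau>) e - digit_sum (small_terms \<tau>) e'"
    by (rule digit_sum_diff[where e = e and e' = e', symmetric, OF small_terms_nonneg summable_small_terms e e'])
  moreover have "(\<Sum>i | \<tau> < x i. (real (e i) - real (e' i)) * x i)
      = (\<Sum>i | \<tau> < x i. real (e i) * x i) - (\<Sum>i | \<tau> < x i. real (e' i) * x i)"
    by (simp add: left_diff_distrib sum_subtractf)
  ultimately show ?thesis
    using digit_sum_split[where e = e, OF \<open>\<tau> > 0\<close> e] digit_sum_split[where e = e', OF \<open>\<tau> > 0\<close> e']
    by linarith
qed

lemma small_digit_difference_bounds:
  assumes e: "\<And>i. e i \<le> m" and e': "\<And>i. e' i \<le> m"
    and e_max: "\<And>i. x i \<le> \<tau> \<Longrightarrow> e i = m"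
    and e'_max: "\<And>i. \<sigma> < x i \<Longrightarrow> x i \<le> \<tau> \<Longrightarrow> e' i = m"
  shows "0 \<le> (\<Sum>i. (real (e i) - real (e' i)) * small_terms \<tau> i)"
    and "(\<Sum>i. (real (e i) - real (e' i)) * small_terms \<tau> i) \<le> real m * small_sum \<sigma>"
proof -
  define d where "d = (\<lambda>i. (real (e i) - real (e' i)) * small_terms \<tau> i)"
  have bounds: "0 \<le> d i \<and> d i \<le> real m * small_terms \<sigma> i" for i
    using e_max[of i] e'_max[of i] e'[of i] nonneg[of i]
    by (cases "x i \<le> \<tau>"; cases "x i \<le> \<sigma>") (auto simp: d_def small_terms_def mult_right_mono)
  have "summable d"
    unfolding d_def using summable_digits[OF small_terms_nonneg summable_small_terms e]
      summable_digits[OF small_terms_nonneg summable_small_terms e']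
    by (simp add: left_diff_distrib summable_diff)
  then have "0 \<le> suminf d" using bounds by (intro suminf_nonneg) auto
  then show "0 \<le> (\<Sum>i. (real (e i) - real (e' i)) * small_terms \<tau> i)" by (simp add: d_def)
  have "suminf d \<le> (\<Sum>i. real m * small_terms \<sigma> i)"
    using bounds \<open>summable d\<close> by (intro suminf_le summable_mult summable_small_terms) auto
  then show "(\<Sum>i. (real (e i) - real (e' i)) * small_terms \<tau> i) \<le> real m * small_sum \<sigma>"
    using suminf_mult[OF summable_small_terms] by (simp add: d_def small_sum_def)
qed

lemma digit_difference_left_of_gap:
  assumes "a \<in> E" and "u > 0" and gap: "\<And>y. y \<in> E \<Longrightarrow> \<not> (a < y \<and> y < a + u)"
    and "\<sigma> > 0" and "a - \<sigma> \<in> E"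
  obtains c c' where "\<forall>i. c i \<le> m" "\<forall>i. c' i \<le> m"
    "\<sigma> - real m * small_sum \<sigma> \<le> (\<Sum>i | u/2 < x i. (real (c i) - real (c' i)) * x i)"
    "(\<Sum>i | u/2 < x i. (real (c i) - real (c' i)) * x i) \<le> \<sigma>"
proof -
  obtain e where e: "\<And>i. e i \<le> m" and a: "a = digit_sum x e"
    using \<open>a \<in> E\<close> by (auto simp: achievement_set_iff)
  obtain e' where e': "\<And>i. e' i \<le> m" and a': "a - \<sigma> = digit_sum x e'"
    using \<open>a - \<sigma> \<in> E\<close> by (auto simp: achievement_set_iff)
  \<comment> \<open>adding a term of length at most u/2 to a, or to a - \<sigma> if that term exceeds \<sigma>, lands in the gap\<close>
  have e_max: "e i = m" if "x i \<le> u/2" for i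
  proof (rule digit_forced_max[OF e])
    show "digit_sum x e + x i \<notin> E" using gap[of "a + x i"] pos[of i] that \<open>u > 0\<close> a by auto
  qed
  have e'_max: "e' i = m" if "\<sigma> < x i" "x i \<le> u/2" for i
  proof (rule digit_forced_max[OF e'])
    show "digit_sum x e' + x i \<notin> E" using gap[of "a - \<sigma> + x i"] that \<open>\<sigma> > 0\<close> a' by auto
  qed
  have "\<sigma> = (\<Sum>i | u/2 < x i. (real (e i) - real (e' i)) * x i)
      + (\<Sum>i. (real (e i) - real (e' i)) * small_terms (u/2) i)"
    using digit_sum_diff_split[where e = e and e' = e', OF _ e e', of "u/2"] \<open>u > 0\<close> a a' by simp
  then show thesis
    using small_digit_difference_bounds[where e = e and e' = e', OF e e' e_max e'_max] e e'
    by (intro that[of e e']) auto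
qed

lemma kakeya_condition_if_full_left_of_gap:
  assumes "a \<in> E" and "u > 0" and gap: "\<And>y. y \<in> E \<Longrightarrow> \<not> (a < y \<and> y < a + u)"
    and "\<delta> > 0" and full: "{a - \<delta>..a} \<subseteq> E"
  obtains s where "s > 0" "\<And>k. x k \<le> s \<Longrightarrow> x k \<le> real m * sum_below (x k)"
proof -
  have "finite {i. u/2 < x i}" using \<open>u > 0\<close> by (intro finite_large_indices) simp
  then obtain \<eta> where "\<eta> > 0" and \<eta>:
    "\<And>c c'. \<forall>i. c i \<le> m \<Longrightarrow> \<forall>i. c' i \<le> m \<Longrightarrow>
      0 < (\<Sum>i | u/2 < x i. (real (c i) - real (c' i)) * x i) \<Longrightarrow>
      \<eta> \<le> (\<Sum>i | u/2 < x i. (real (c i) - real (c' i)) * x i)"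
    using positive_digit_differences_bounded_below[where x = x and m = m] by blast
  have "x k \<le> real m * sum_below (x k)" if k: "x k \<le> min \<eta> \<delta>" for k
  proof (rule ccontr)
    assume contra: "\<not> x k \<le> real m * sum_below (x k)"
    \<comment> \<open>a - \<sigma> \<in> E, but its large digits would differ from those of a by a positive amount below \<eta>\<close>
    define \<sigma> where "\<sigma> = (real m * sum_below (x k) + x k) / 2"
    have "sum_below (x k) \<ge> 0" unfolding sum_below_def by (intro suminf_nonneg summable_below) (auto simp: nonneg)
    then have "real m * sum_below (x k) \<ge> 0" by simp
    then have \<sigma>: "real m * sum_below (x k) < \<sigma>" "\<sigma> < x k" "0 < \<sigma>"
      using contra by (auto simp: \<sigma>_def)
    have "small_sum \<sigma> \<le> sum_below (x k)"
      unfolding small_sum_def sum_below_def using \<sigma>(2)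
      by (intro suminf_le summable_small_terms summable_below) (auto simp: small_terms_def nonneg)
    then have "real m * small_sum \<sigma> \<le> real m * sum_below (x k)" by (rule mult_left_mono) simp
    moreover have "a - \<sigma> \<in> E" using full \<sigma> k by auto
    then obtain c c' where "\<forall>i. c i \<le> m" "\<forall>i. c' i \<le> m"
      "\<sigma> - real m * small_sum \<sigma> \<le> (\<Sum>i | u/2 < x i. (real (c i) - real (c' i)) * x i)"
      "(\<Sum>i | u/2 < x i. (real (c i) - real (c' i)) * x i) \<le> \<sigma>"
      using digit_difference_left_of_gap[OF \<open>a \<in> E\<close> \<open>u > 0\<close> gap \<sigma>(3)] by blast
    ultimately show False using \<eta>[of c c'] \<sigma> k by force
  qed
  then show thesis using \<open>\<eta> > 0\<close> \<open>\<delta> > 0\<close> by (intro that[of "min \<eta> \<delta>"]) auto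
qed

lemma not_full_left_of_gap:
  assumes "\<not> is_finite_union_of_intervals E"
    and "a \<in> E" and "u > 0" and "\<And>y. y \<in> E \<Longrightarrow> \<not> (a < y \<and> y < a + u)" and "\<delta> > 0"
  shows "\<not> {a - \<delta>..a} \<subseteq> E"
proof
  assume "{a - \<delta>..a} \<subseteq> E"
  then obtain s where "s > 0" "\<And>k. x k \<le> s \<Longrightarrow> x k \<le> real m * sum_below (x k)"
    using kakeya_condition_if_full_left_of_gap assms(2-) by blast
  then have "is_finite_union_of_intervals E"
    by (intro finite_union_of_intervals_if_small_set_interval small_set_eq_interval)
  then show False using assms(1) by contradiction
qed

lemma right_of_gap:
  assumes "interior E \<noteq> {}" and "\<not> is_finite_union_of_intervals E"
    and "b \<in> E" and "u > 0" and gap: "\<And>y. y \<in> E \<Longrightarrow> \<not> (b - u < y \<and> y < b)"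
  shows "\<forall>\<epsilon>>0. \<exists>p q. p < q \<and> {p..q} \<subseteq> E \<and> b < p \<and> q < b + \<epsilon>"
    and "\<forall>\<delta>>0. \<not> {b..b + \<delta>} \<subseteq> E"
proof -
  \<comment> \<open>the reflection y \<mapsto> S - y maps E onto itself and turns b into the left end of a gap\<close>
  define S where "S = real m * suminf x"
  have reflect: "S - y \<in> E" if "y \<in> E" for y
    unfolding S_def by (rule achievement_set_reflect[OF nonneg summable that])
  have reflect_interval: "{S - q..S - p} \<subseteq> E" if "{p..q} \<subseteq> E" for p q
  proof
    fix z assume "z \<in> {S - q..S - p}"
    then have "S - z \<in> E" using that by auto
    then have "S - (S - z) \<in> E" by (rule reflect)
    then show "z \<in> E" by simp
  qed
  have "S - b \<in> E" using reflect[OF \<open>b \<in> E\<close>] .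
  moreover have gap': "\<not> (S - b < y \<and> y < S - b + u)" if "y \<in> E" for y
    using gap[OF reflect[OF that]] by auto
  show "\<forall>\<epsilon>>0. \<exists>p q. p < q \<and> {p..q} \<subseteq> E \<and> b < p \<and> q < b + \<epsilon>"
  proof (intro allI impI)
    fix \<epsilon> :: real assume "\<epsilon> > 0"
    then obtain p q where "p < q" "{p..q} \<subseteq> E" "S - b - \<epsilon> < p" "q < S - b"
      using intervals_left_of_gap[OF \<open>S - b \<in> E\<close> \<open>u > 0\<close> gap' assms(1)] by blast
    then show "\<exists>p q. p < q \<and> {p..q} \<subseteq> E \<and> b < p \<and> q < b + \<epsilon>"
      using reflect_interval by (intro exI[of _ "S - q"] exI[of _ "S - p"]) auto
  qed
  show "\<forall>\<delta>>0. \<not> {b..b + \<delta>} \<subseteq> E"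
  proof (intro allI impI notI)
    fix \<delta> :: real assume "\<delta> > 0" and "{b..b + \<delta>} \<subseteq> E"
    then have "{S - b - \<delta>..S - b} \<subseteq> E" using reflect_interval[of b "b + \<delta>"] by (simp add: algebra_simps)
    then show False using not_full_left_of_gap[OF assms(2) \<open>S - b \<in> E\<close> \<open>u > 0\<close> gap' \<open>\<delta> > 0\<close>] by simp
  qed
qed

lemma M_cantorval:
  assumes "interior E \<noteq> {}" and "\<not> is_finite_union_of_intervals E"
  shows "is_M_cantorval E"
  unfolding is_M_cantorval_def
proof (intro conjI allI impI)
  show "compact E" by (rule compact_achievement_set[OF nonneg summable])
  then have "closed E" by (rule compact_imp_closed)
  show "perfect_set E" by (rule perfect_achievement_set[OF pos summable m_pos])
  fix G assume "is_gap E G"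
  note ends = gap_endpoints[OF \<open>closed E\<close> this]
  define u where "u = Sup G - Inf G"
  have "u > 0" using ends(3) by (simp add: u_def)
  have gap_after_inf: "\<not> (Inf G < y \<and> y < Inf G + u)" if "y \<in> E" for y
    using ends(4)[of y] that by (auto simp: u_def)
  have gap_before_sup: "\<not> (Sup G - u < y \<and> y < Sup G)" if "y \<in> E" for y
    using ends(4)[of y] that by (auto simp: u_def)
  show "acc_left E (Inf G)"
    using intervals_left_of_gap[OF ends(1) \<open>u > 0\<close> gap_after_inf assms(1)]
      not_full_left_of_gap[OF assms(2) ends(1) \<open>u > 0\<close> gap_after_inf]
    by (intro acc_left_if_intervals_accumulate ends(1)) auto
  show "acc_right E (Sup G)"
    using right_of_gap[OF assms ends(2) \<open>u > 0\<close> gap_before_sup]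
    by (intro acc_right_if_intervals_accumulate ends(2)) auto
qed

end

section \<open>The middle-thirds Cantor set\<close>

definition cantor_weight :: "nat \<Rightarrow> real" where
  "cantor_weight i = 2 / 3 ^ Suc i"

definition cantor_point :: "(nat \<Rightarrow> bool) \<Rightarrow> real" where
  "cantor_point w = digit_sum cantor_weight (\<lambda>i. of_bool (w i))"

definition cantor_prefix :: "nat \<Rightarrow> (nat \<Rightarrow> bool) \<Rightarrow> real" where
  "cantor_prefix n w = (\<Sum>i<n. of_bool (w i) * cantor_weight i)"

lemma cantor_weight_nonneg: "cantor_weight i \<ge> 0"
  by (simp add: cantor_weight_def)

lemma cantor_weight_tail_sums: "(\<lambda>i. cantor_weight (i + k)) sums (1 / 3 ^ k)"
proof -
  have "(\<lambda>i. (2 / 3 ^ Suc k) * (1/3::real) ^ i) sums ((2 / 3 ^ Suc k) * (1 / (1 - 1/3)))"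
    by (intro sums_mult geometric_sums) simp
  moreover have "(\<lambda>i. (2 / 3 ^ Suc k) * (1/3::real) ^ i) = (\<lambda>i. cantor_weight (i + k))"
    by (auto simp: fun_eq_iff cantor_weight_def power_add field_simps power_one_over)
  ultimately show ?thesis by simp
qed

lemma summable_cantor_weight: "summable cantor_weight"
  using sums_summable[OF cantor_weight_tail_sums[of 0]] by simp

lemma summable_cantor_digits: "summable (\<lambda>i. of_bool (w i) * cantor_weight i)"
  using summable_digits[OF cantor_weight_nonneg summable_cantor_weight, of "\<lambda>i. of_bool (w i)" 1] by simp

lemma range_cantor_point: "range cantor_point = achievement_set 1 cantor_weight"
proof (intro equalityI subsetI)
  fix y assume "y \<in> range cantor_point"
  then obtain w where "y = digit_sum cantor_weight (\<lambda>i. of_bool (w i))" by (auto simp: cantor_point_def)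
  then show "y \<in> achievement_set 1 cantor_weight"
    unfolding achievement_set_iff by (intro exI[of _ "\<lambda>i. of_bool (w i)"]) simp
next
  fix y assume "y \<in> achievement_set 1 cantor_weight"
  then obtain e where e: "\<And>i. e i \<le> 1" and y: "y = digit_sum cantor_weight e"
    by (auto simp: achievement_set_iff)
  have "(\<lambda>i. of_bool (e i = 1)) = e" using e by (auto simp: fun_eq_iff le_Suc_eq)
  then show "y \<in> range cantor_point" using y unfolding cantor_point_def by (metis rangeI)
qed

lemma cantor_point_split:
  "cantor_point w = cantor_prefix n w + (\<Sum>i. of_bool (w (i + n)) * cantor_weight (i + n))"
  unfolding cantor_point_def digit_sum_def cantor_prefix_def
  using suminf_split_initial_segment[OF summable_cantor_digits, of w n] by simp

lemma cantor_tail_bounds: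
  shows "0 \<le> (\<Sum>i. of_bool (w (i + n)) * cantor_weight (i + n))"
    and "(\<Sum>i. of_bool (w (i + n)) * cantor_weight (i + n)) \<le> 1 / 3 ^ n"
proof -
  have s: "summable (\<lambda>i. of_bool (w (i + n)) * cantor_weight (i + n))"
    using summable_ignore_initial_segment[OF summable_cantor_digits, of w n] by simp
  then show "0 \<le> (\<Sum>i. of_bool (w (i + n)) * cantor_weight (i + n))"
    by (intro suminf_nonneg) (simp_all add: cantor_weight_def)
  have "(\<Sum>i. of_bool (w (i + n)) * cantor_weight (i + n)) \<le> (\<Sum>i. cantor_weight (i + n))"
    by (intro suminf_le s sums_summable[OF cantor_weight_tail_sums]) (simp add: cantor_weight_nonneg)
  also have "\<dots> = 1 / 3 ^ n" by (rule sums_unique[OF cantor_weight_tail_sums, symmetric])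
  finally show "(\<Sum>i. of_bool (w (i + n)) * cantor_weight (i + n)) \<le> 1 / 3 ^ n" .
qed

lemma cantor_prefix_Suc:
  "cantor_prefix (Suc n) w = of_bool (w 0) * (2/3) + cantor_prefix n (\<lambda>i. w (Suc i)) / 3"
  unfolding cantor_prefix_def
  by (subst sum.lessThan_Suc_shift) (simp add: sum_divide_distrib cantor_weight_def)

lemma cantor_stage_eq: "cantor_stage n = {cantor_prefix n w + t / 3 ^ n | w t. 0 \<le> t \<and> t \<le> 1}"
proof (induction n)
  case 0
  show ?case by (force simp: cantor_prefix_def)
next
  case (Suc n)
  show ?case
  proof (intro equalityI subsetI)
    fix y assume "y \<in> cantor_stage (Suc n)"
    then obtain v where v: "v \<in> cantor_stage n" and "y = v / 3 \<or> y = 2/3 + v / 3" by auto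
    then have y: "y = of_bool (y \<noteq> v / 3) * (2/3) + v / 3" by auto
    obtain w t where t: "0 \<le> t" "t \<le> 1" and v_eq: "v = cantor_prefix n w + t / 3 ^ n"
      using v Suc by auto
    have "cantor_prefix (Suc n) (case_nat (y \<noteq> v / 3) w) = of_bool (y \<noteq> v / 3) * (2/3) + cantor_prefix n w / 3"
      by (simp add: cantor_prefix_Suc)
    then have "y = cantor_prefix (Suc n) (case_nat (y \<noteq> v / 3) w) + t / 3 ^ Suc n"
      using y v_eq by (simp add: add_divide_distrib)
    then show "y \<in> {cantor_prefix (Suc n) w + t / 3 ^ Suc n | w t. 0 \<le> t \<and> t \<le> 1}"
      using t by blast
  next
    fix y assume "y \<in> {cantor_prefix (Suc n) w + t / 3 ^ Suc n | w t. 0 \<le> t \<and> t \<le> 1}"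
    then obtain w t where t: "0 \<le> t" "t \<le> 1" and y: "y = cantor_prefix (Suc n) w + t / 3 ^ Suc n"
      by auto
    define v where "v = cantor_prefix n (\<lambda>i. w (Suc i)) + t / 3 ^ n"
    have "v \<in> cantor_stage n" using Suc t unfolding v_def by blast
    moreover have "y = of_bool (w 0) * (2/3) + v / 3"
      using y by (simp add: cantor_prefix_Suc v_def add_divide_distrib)
    ultimately show "y \<in> cantor_stage (Suc n)" by (cases "w 0") auto
  qed
qed

lemma middle_thirds_cantor_eq: "middle_thirds_cantor = range cantor_point"
proof (intro equalityI subsetI)
  fix y assume "y \<in> range cantor_point"
  then obtain w where y: "y = cantor_point w" by auto
  have "y \<in> cantor_stage n" for n
  proof -
    define t where "t = 3 ^ n * (\<Sum>i. of_bool (w (i + n)) * cantor_weight (i + n))"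
    have "0 \<le> t" "t \<le> 1" using cantor_tail_bounds[of w n] by (auto simp: t_def field_simps)
    moreover have "y = cantor_prefix n w + t / 3 ^ n" using cantor_point_split[of w n] y by (simp add: t_def)
    ultimately show ?thesis unfolding cantor_stage_eq by blast
  qed
  then show "y \<in> middle_thirds_cantor" by (simp add: middle_thirds_cantor_def)
next
  fix y assume "y \<in> middle_thirds_cantor"
  then have stages: "\<And>n. y \<in> cantor_stage n" by (simp add: middle_thirds_cantor_def)
  have "closed (range cantor_point)"
    unfolding range_cantor_point
    by (rule compact_imp_closed[OF compact_achievement_set[OF cantor_weight_nonneg summable_cantor_weight]])
  moreover have "y \<in> closure (range cantor_point)"
    unfolding closure_approachable
  proof (intro allI impI)
    fix \<epsilon> :: real assume "\<epsilon> > 0"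
    obtain n where n: "(1/3::real) ^ n < \<epsilon>" using real_arch_pow_inv[OF \<open>\<epsilon> > 0\<close>, of "1/3"] by auto
    obtain w t where t: "0 \<le> t" "t \<le> 1" and y: "y = cantor_prefix n w + t / 3 ^ n"
      using stages[of n] unfolding cantor_stage_eq by blast
    \<comment> \<open>the left end point of the stage-n interval containing y\<close>
    define w' where "w' i = (i < n \<and> w i)" for i
    have "cantor_point w' = (\<Sum>i<n. of_bool (w' i) * cantor_weight i)"
      unfolding cantor_point_def digit_sum_def by (subst suminf_finite[of "{..<n}"]) (auto simp: w'_def)
    also have "\<dots> = cantor_prefix n w" unfolding cantor_prefix_def by (rule sum.cong) (auto simp: w'_def)
    finally have "dist (cantor_point w') y = t / 3 ^ n" using y t by (simp add: dist_real_def)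
    also have "\<dots> \<le> 1 / 3 ^ n" using t by (simp add: divide_right_mono)
    also have "\<dots> < \<epsilon>" using n by (simp add: power_one_over)
    finally show "\<exists>y'\<in>range cantor_point. dist y' y < \<epsilon>" by blast
  qed
  ultimately show "y \<in> range cantor_point" by (simp add: closure_closed)
qed

lemma first_difference:
  fixes w w' :: "nat \<Rightarrow> 'a"
  assumes "w \<noteq> w'"
  obtains n where "\<And>i. i < n \<Longrightarrow> w i = w' i" and "w n \<noteq> w' n"
  using assms exists_least_iff[of "\<lambda>n. w n \<noteq> w' n"] by (auto simp: fun_eq_iff)

lemma cantor_point_separated:
  assumes "\<And>i. i < n \<Longrightarrow> w i = w' i" and "\<not> w n" and "w' n"
  shows "cantor_point w + 1 / 3 ^ Suc n \<le> cantor_point w'"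
proof -
  let ?tail = "\<lambda>w. \<Sum>i. of_bool (w (i + Suc n)) * cantor_weight (i + Suc n)"
  have "cantor_prefix (Suc n) w' = cantor_prefix (Suc n) w + cantor_weight n"
    using assms unfolding cantor_prefix_def by simp
  moreover have "?tail w \<le> 1 / 3 ^ Suc n" "0 \<le> ?tail w'" by (rule cantor_tail_bounds)+
  moreover have "cantor_weight n = 2 / 3 ^ Suc n" by (simp add: cantor_weight_def)
  ultimately show ?thesis
    using cantor_point_split[of w "Suc n"] cantor_point_split[of w' "Suc n"] by simp
qed

lemma cantor_point_close_imp_prefix:
  assumes "\<bar>cantor_point w - cantor_point w'\<bar> < 1 / 3 ^ n" and "i < n"
  shows "w i = w' i"
proof (rule ccontr)
  assume "w i \<noteq> w' i"
  then obtain k where k: "\<And>j. j < k \<Longrightarrow> w j = w' j" "w k \<noteq> w' k"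
    using first_difference[of w w'] by blast
  then have "k \<le> i" using \<open>w i \<noteq> w' i\<close> by (meson not_le)
  have "1 / 3 ^ Suc k \<le> \<bar>cantor_point w - cantor_point w'\<bar>"
    using cantor_point_separated[of k w w'] cantor_point_separated[of k w' w] k by (cases "w k") auto
  moreover have "(1::real) / 3 ^ n \<le> 1 / 3 ^ Suc k"
    using \<open>k \<le> i\<close> \<open>i < n\<close> by (intro divide_left_mono power_increasing) auto
  ultimately show False using assms(1) by simp
qed

lemma inj_cantor_point: "inj cantor_point"
proof (rule injI)
  fix w w' assume "cantor_point w = cantor_point w'"
  then show "w = w'" using cantor_point_close_imp_prefix[of w w' "Suc i" i for i] by auto
qed

section \<open>Compact perfect nowhere dense sets\<close>

locale perfect_nowhere_dense =
  fixes K :: "real set"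
  assumes compact: "compact K" and nonempty: "K \<noteq> {}"
    and perfect: "\<And>y. y \<in> K \<Longrightarrow> y islimpt K" and nowhere_dense: "interior K = {}"
begin

definition portion :: "real \<times> real \<Rightarrow> real set" where
  "portion p = K \<inter> {fst p<..<snd p}"

definition admissible :: "real \<times> real \<Rightarrow> bool" where
  "admissible p \<longleftrightarrow> fst p < snd p \<and> fst p \<notin> K \<and> snd p \<notin> K \<and> portion p \<noteq> {}"

definition portion_min :: "real \<times> real \<Rightarrow> real" where
  "portion_min p = Inf (portion p)"

definition portion_max :: "real \<times> real \<Rightarrow> real" where
  "portion_max p = Sup (portion p)"

text \<open>The choice is possible because K has empty interior; cutting in the middle third makes
  the pieces of K shrink by a factor 2/3.\<close>
definition cut_point :: "real \<times> real \<Rightarrow> real" where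
  "cut_point p = (SOME c. portion_min p + (portion_max p - portion_min p) / 3 < c
     \<and> c < portion_max p - (portion_max p - portion_min p) / 3 \<and> c \<notin> K)"

definition refine :: "real \<times> real \<Rightarrow> bool \<Rightarrow> real \<times> real" where
  "refine p b = (if b then (cut_point p, snd p) else (fst p, cut_point p))"

lemma closed_portion:
  assumes "admissible p"
  shows "closed (portion p)"
proof -
  have "portion p = K \<inter> {fst p..snd p}"
    using assms by (auto simp: portion_def admissible_def order.order_iff_strict)
  then show ?thesis using compact_imp_closed[OF compact] by (simp add: closed_Int)
qed

lemma bdd_portion: "bdd_below (portion p)" "bdd_above (portion p)"
proof -
  have "bounded (portion p)"
    using compact_imp_bounded[OF compact] by (rule bounded_subset) (auto simp: portion_def)
  then show "bdd_below (portion p)" "bdd_above (portion p)"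
    by (rule bounded_imp_bdd_below, rule bounded_imp_bdd_above)
qed

lemma portion_min_max:
  assumes "admissible p"
  shows "portion_min p \<in> portion p" and "portion_max p \<in> portion p"
    and "\<And>y. y \<in> portion p \<Longrightarrow> portion_min p \<le> y \<and> y \<le> portion_max p"
proof -
  have "portion p \<noteq> {}" using assms by (simp add: admissible_def)
  then show "portion_min p \<in> portion p" "portion_max p \<in> portion p"
    unfolding portion_min_def portion_max_def
    by (rule closed_contains_Inf[OF _ bdd_portion(1) closed_portion[OF assms]],
        rule closed_contains_Sup[OF _ bdd_portion(2) closed_portion[OF assms]])
  show "portion_min p \<le> y \<and> y \<le> portion_max p" if "y \<in> portion p" for y
    unfolding portion_min_def portion_max_def
    using cInf_lower[OF that bdd_portion(1)] cSup_upper[OF that bdd_portion(2)] by simp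
qed

lemma portion_min_less_max:
  assumes "admissible p"
  shows "portion_min p < portion_max p"
proof -
  have l: "portion_min p \<in> K" "fst p < portion_min p" "portion_min p < snd p"
    using portion_min_max(1)[OF assms] by (auto simp: portion_def)
  define r where "r = min (portion_min p - fst p) (snd p - portion_min p)"
  have "r > 0" using l by (simp add: r_def)
  then obtain y where y: "y \<in> K" "y \<noteq> portion_min p" "dist y (portion_min p) < r"
    using perfect[OF l(1)] unfolding islimpt_approachable by blast
  then have "y \<in> portion p" by (auto simp: portion_def r_def dist_real_def)
  then have "portion_min p \<le> y" "y \<le> portion_max p" using portion_min_max(3)[OF assms] by auto
  then show ?thesis using y(2) by simp
qed

lemma cut_point_props:
  assumes "admissible p"
  shows "portion_min p + (portion_max p - portion_min p) / 3 < cut_point p"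
    and "cut_point p < portion_max p - (portion_max p - portion_min p) / 3" and "cut_point p \<notin> K"
proof -
  let ?a = "portion_min p + (portion_max p - portion_min p) / 3"
  let ?b = "portion_max p - (portion_max p - portion_min p) / 3"
  have "?a < ?b" using portion_min_less_max[OF assms] by (simp add: field_simps)
  moreover have "\<not> {?a<..<?b} \<subseteq> K"
    using nowhere_dense interior_maximal[of "{?a<..<?b}" K] \<open>?a < ?b\<close> by auto
  then have "\<exists>c. ?a < c \<and> c < ?b \<and> c \<notin> K" by auto
  then have "?a < cut_point p \<and> cut_point p < ?b \<and> cut_point p \<notin> K"
    unfolding cut_point_def by (rule someI_ex)
  then show "?a < cut_point p" "cut_point p < ?b" "cut_point p \<notin> K" by auto
qed

lemma cut_point_inside:
  assumes "admissible p"
  shows "fst p < cut_point p" "cut_point p < snd p" "portion_min p < cut_point p" "cut_point p < portion_max p"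
  using cut_point_props[OF assms] portion_min_less_max[OF assms] portion_min_max(1,2)[OF assms]
  by (auto simp: portion_def field_simps)

lemma portion_refine_subset:
  assumes "admissible p"
  shows "portion (refine p b) \<subseteq> portion p"
  using cut_point_inside[OF assms] by (auto simp: refine_def portion_def)

lemma portion_refine_False: "portion (refine p False) \<subseteq> {..<cut_point p}"
  by (auto simp: refine_def portion_def)

lemma portion_refine_True: "portion (refine p True) \<subseteq> {cut_point p<..}"
  by (auto simp: refine_def portion_def)

lemma admissible_refine:
  assumes "admissible p"
  shows "admissible (refine p b)"
proof -
  have "(if b then portion_max p else portion_min p) \<in> portion (refine p b)"
    using portion_min_max(1,2)[OF assms] cut_point_inside[OF assms] by (auto simp: refine_def portion_def)
  then show ?thesis
    using assms cut_point_inside[OF assms] cut_point_props(3)[OF assms] by (auto simp: admissible_def refine_def)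
qed

lemma mem_portion_refine:
  assumes "admissible p" and "y \<in> portion p"
  shows "y \<in> portion (refine p (cut_point p < y))"
proof -
  have "y \<noteq> cut_point p" using cut_point_props(3)[OF assms(1)] assms(2) by (auto simp: portion_def)
  then show ?thesis using assms(2) by (auto simp: refine_def portion_def)
qed

lemma width_refine:
  assumes "admissible p"
  shows "portion_max (refine p b) - portion_min (refine p b) \<le> 2/3 * (portion_max p - portion_min p)"
proof -
  have p': "admissible (refine p b)" by (rule admissible_refine[OF assms])
  have "portion_min (refine p b) \<in> portion p" "portion_max (refine p b) \<in> portion p"
    using portion_min_max(1,2)[OF p'] portion_refine_subset[OF assms] by auto
  then have bounds: "portion_min p \<le> portion_min (refine p b)" "portion_max (refine p b) \<le> portion_max p"
    using portion_min_max(3)[OF assms] by auto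
  show ?thesis
  proof (cases b)
    case True
    then have "portion_min (refine p b) \<in> {cut_point p<..}"
      using portion_min_max(1)[OF p'] portion_refine_True[of p] True by auto
    then have "cut_point p < portion_min (refine p b)" by simp
    then show ?thesis using bounds cut_point_props(1)[OF assms] by (simp add: field_simps)
  next
    case False
    then have "portion_max (refine p b) \<in> {..<cut_point p}"
      using portion_min_max(2)[OF p'] portion_refine_False[of p] False by auto
    then have "portion_max (refine p b) < cut_point p" by simp
    then show ?thesis using bounds cut_point_props(2)[OF assms] by (simp add: field_simps)
  qed
qed

primrec nest :: "(nat \<Rightarrow> bool) \<Rightarrow> nat \<Rightarrow> real \<times> real" where
  "nest w 0 = (Inf K - 1, Sup K + 1)"
| "nest w (Suc n) = refine (nest w n) (w n)"

lemma subset_initial_interval: "K \<subseteq> {Inf K - 1<..<Sup K + 1}"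
proof
  fix y assume "y \<in> K"
  have "bdd_below K" "bdd_above K"
    using compact_imp_bounded[OF compact] by (auto intro: bounded_imp_bdd_below bounded_imp_bdd_above)
  then have "Inf K \<le> y" "y \<le> Sup K" using \<open>y \<in> K\<close> by (auto intro: cInf_lower cSup_upper)
  then show "y \<in> {Inf K - 1<..<Sup K + 1}" by simp
qed

lemma portion_initial: "portion (Inf K - 1, Sup K + 1) = K"
  using subset_initial_interval by (auto simp: portion_def)

lemma admissible_nest: "admissible (nest w n)"
proof (induction n)
  case 0
  obtain y where "y \<in> K" using nonempty by blast
  then have "Inf K - 1 < Sup K + 1" using subset_initial_interval by fastforce
  moreover have "Inf K - 1 \<notin> K" "Sup K + 1 \<notin> K" using subset_initial_interval by auto
  ultimately show ?case using nonempty by (simp add: admissible_def portion_initial)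
qed (simp add: admissible_refine)

lemma portion_nest_antimono: "m \<le> n \<Longrightarrow> portion (nest w n) \<subseteq> portion (nest w m)"
proof (induction n)
  case (Suc n)
  show ?case
  proof (cases "m = Suc n")
    case False
    have "portion (nest w (Suc n)) \<subseteq> portion (nest w n)"
      using portion_refine_subset[OF admissible_nest] by simp
    then show ?thesis using Suc False by auto
  qed simp
qed simp

lemma width_nest: "portion_max (nest w n) - portion_min (nest w n) \<le> (2/3) ^ n * (Sup K - Inf K)"
proof (induction n)
  case (Suc n)
  have "portion_max (nest w (Suc n)) - portion_min (nest w (Suc n))
      \<le> 2/3 * (portion_max (nest w n) - portion_min (nest w n))"
    using width_refine[OF admissible_nest] by simp
  also have "\<dots> \<le> 2/3 * ((2/3) ^ n * (Sup K - Inf K))"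
    using Suc by simp
  finally show ?case by simp
qed (simp add: portion_min_def portion_max_def portion_initial)

lemma nest_prefix: "(\<And>i. i < n \<Longrightarrow> w i = w' i) \<Longrightarrow> nest w n = nest w' n"
  by (induction n) auto

lemma nest_singleton: "\<exists>y. (\<Inter>n. portion (nest w n)) = {y}"
proof (rule decreasing_closed_nest_sing)
  show "\<And>n. closed (portion (nest w n))" using closed_portion[OF admissible_nest] by simp
  show "\<And>n. portion (nest w n) \<noteq> {}" using admissible_nest by (simp add: admissible_def)
  show "\<And>m n. m \<le> n \<Longrightarrow> portion (nest w n) \<subseteq> portion (nest w m)" by (rule portion_nest_antimono)
  fix e :: real assume "e > 0"
  let ?W = "Sup K - Inf K"
  have "(\<lambda>n. (2/3::real) ^ n * ?W) \<longlonglongrightarrow> 0 * ?W"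
    by (intro tendsto_mult tendsto_const LIMSEQ_realpow_zero) auto
  then have "\<forall>\<^sub>F n in sequentially. (2/3::real) ^ n * ?W < e"
    using \<open>e > 0\<close> by (auto dest: order_tendstoD(2))
  then obtain n where n: "(2/3::real) ^ n * ?W < e" by (auto simp: eventually_sequentially)
  have "dist y y' < e" if "y \<in> portion (nest w n)" "y' \<in> portion (nest w n)" for y y'
  proof -
    have "portion_min (nest w n) \<le> y \<and> y \<le> portion_max (nest w n)"
      "portion_min (nest w n) \<le> y' \<and> y' \<le> portion_max (nest w n)"
      using portion_min_max(3)[OF admissible_nest] that by blast+
    then have "dist y y' \<le> portion_max (nest w n) - portion_min (nest w n)"
      by (auto simp: dist_real_def abs_le_iff)
    then show ?thesis using width_nest[of w n] n by linarith
  qed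
  then show "\<exists>n. \<forall>y\<in>portion (nest w n). \<forall>y'\<in>portion (nest w n). dist y y' < e" by blast
qed

definition code_point :: "(nat \<Rightarrow> bool) \<Rightarrow> real" where
  "code_point w = (THE y. (\<Inter>n. portion (nest w n)) = {y})"

lemma Inter_portion_nest: "(\<Inter>n. portion (nest w n)) = {code_point w}"
  using nest_singleton[of w] unfolding code_point_def by (metis (mono_tags) the_equality singleton_inject)

lemma code_point_in_portion: "code_point w \<in> portion (nest w n)"
  using Inter_portion_nest[of w] by blast

lemma code_point_in: "code_point w \<in> K"
  using code_point_in_portion[of w 0] by (simp add: portion_initial)

lemma code_point_prefix_close:
  assumes "\<And>i. i < n \<Longrightarrow> w i = w' i"
  shows "\<bar>code_point w - code_point w'\<bar> \<le> (2/3) ^ n * (Sup K - Inf K)"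
proof -
  have "nest w' n = nest w n" using nest_prefix[OF assms] by simp
  then have "code_point w \<in> portion (nest w n)" "code_point w' \<in> portion (nest w n)"
    using code_point_in_portion[of w n] code_point_in_portion[of w' n] by simp_all
  then have "portion_min (nest w n) \<le> code_point w \<and> code_point w \<le> portion_max (nest w n)"
    "portion_min (nest w n) \<le> code_point w' \<and> code_point w' \<le> portion_max (nest w n)"
    using portion_min_max(3)[OF admissible_nest] by blast+
  then show ?thesis using width_nest[of w n] by (simp add: abs_le_iff)
qed

lemma portion_refine_disjoint: "portion (refine p True) \<inter> portion (refine p False) = {}"
  by (auto simp: portion_def refine_def)

lemma inj_code_point: "inj code_point"
proof (rule injI, rule ccontr)
  fix w w' assume "code_point w = code_point w'" and "w \<noteq> w'"
  obtain n where prefix: "\<And>i. i < n \<Longrightarrow> w i = w' i" and "w n \<noteq> w' n"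
    using first_difference[OF \<open>w \<noteq> w'\<close>] by blast
  have "nest w' n = nest w n" using nest_prefix[OF prefix] by simp
  then have "code_point w \<in> portion (refine (nest w n) (w n))"
    "code_point w \<in> portion (refine (nest w n) (w' n))"
    using code_point_in_portion[of w "Suc n"] code_point_in_portion[of w' "Suc n"]
      \<open>code_point w = code_point w'\<close> by simp_all
  then show False
    using \<open>w n \<noteq> w' n\<close> portion_refine_disjoint[of "nest w n"] by (cases "w n") (simp_all add: disjoint_iff)
qed

lemma range_code_point: "range code_point = K"
proof (intro equalityI subsetI)
  fix y assume "y \<in> K"
  \<comment> \<open>follow the side of each cut on which y lies\<close>
  define p where "p = rec_nat (Inf K - 1, Sup K + 1) (\<lambda>_ q. refine q (cut_point q < y))"
  define w where "w n = (cut_point (p n) < y)" for n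
  have nest: "nest w n = p n" for n by (induction n) (simp_all add: p_def w_def)
  have "y \<in> portion (p n)" for n
  proof (induction n)
    case 0
    then show ?case using \<open>y \<in> K\<close> by (simp add: p_def portion_initial)
  next
    case (Suc n)
    have "p (Suc n) = refine (p n) (cut_point (p n) < y)" by (simp add: p_def)
    moreover have "admissible (p n)" using admissible_nest[of w n] by (simp add: nest)
    ultimately show ?case using mem_portion_refine Suc by simp
  qed
  then have "y \<in> (\<Inter>n. portion (nest w n))" by (simp add: nest)
  then show "y \<in> range code_point" using Inter_portion_nest[of w] by auto
qed (auto simp: code_point_in)

lemma continuous_on_code_point_inv:
  "continuous_on (range cantor_point) (code_point \<circ> inv cantor_point)"
  unfolding continuous_on_iff
proof (intro ballI allI impI)
  fix t \<epsilon> :: real assume "t \<in> range cantor_point" "\<epsilon> > 0"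
  have "(\<lambda>n. (2/3::real) ^ n * (Sup K - Inf K)) \<longlonglongrightarrow> 0 * (Sup K - Inf K)"
    by (intro tendsto_mult tendsto_const LIMSEQ_realpow_zero) auto
  then have "\<forall>\<^sub>F n in sequentially. (2/3::real) ^ n * (Sup K - Inf K) < \<epsilon>"
    using \<open>\<epsilon> > 0\<close> by (auto dest: order_tendstoD(2))
  then obtain n where n: "(2/3::real) ^ n * (Sup K - Inf K) < \<epsilon>" by (auto simp: eventually_sequentially)
  \<comment> \<open>close points of the Cantor set have codes with a long common prefix\<close>
  have "dist ((code_point \<circ> inv cantor_point) s) ((code_point \<circ> inv cantor_point) t) < \<epsilon>"
    if "s \<in> range cantor_point" "dist s t < 1 / 3 ^ n" for s
  proof -
    obtain w w' where s: "s = cantor_point w" and t: "t = cantor_point w'"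
      using \<open>s \<in> range cantor_point\<close> \<open>t \<in> range cantor_point\<close> by auto
    have "\<And>i. i < n \<Longrightarrow> w i = w' i"
      using cantor_point_close_imp_prefix[of w w' n] that(2) by (simp add: s t dist_real_def)
    then have "\<bar>code_point w - code_point w'\<bar> \<le> (2/3) ^ n * (Sup K - Inf K)"
      by (rule code_point_prefix_close)
    then show ?thesis using n inj_cantor_point by (simp add: s t dist_real_def)
  qed
  then show "\<exists>d>0. \<forall>s\<in>range cantor_point. dist s t < d \<longrightarrow>
      dist ((code_point \<circ> inv cantor_point) s) ((code_point \<circ> inv cantor_point) t) < \<epsilon>"
    by (intro exI[of _ "1 / 3 ^ n"]) auto
qed

theorem homeomorphic_middle_thirds_cantor: "K homeomorphic middle_thirds_cantor"
proof -
  let ?C = "range cantor_point" and ?h = "code_point \<circ> inv cantor_point"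
  have "compact ?C"
    unfolding range_cantor_point by (rule compact_achievement_set[OF cantor_weight_nonneg summable_cantor_weight])
  moreover have "?h ` ?C = K" by (simp add: image_image inv_f_f[OF inj_cantor_point] range_code_point)
  moreover have "inj_on ?h ?C"
  proof (rule inj_onI)
    fix s t assume "s \<in> ?C" "t \<in> ?C" "?h s = ?h t"
    then obtain w w' where "s = cantor_point w" "t = cantor_point w'" by auto
    then show "s = t"
      using \<open>?h s = ?h t\<close> inj_code_point by (simp add: inv_f_f[OF inj_cantor_point] inj_eq)
  qed
  ultimately obtain g where "homeomorphism ?C K ?h g"
    using homeomorphism_compact[OF _ continuous_on_code_point_inv] by blast
  then have "?C homeomorphic K" unfolding homeomorphic_def by blast
  then show ?thesis unfolding middle_thirds_cantor_eq by (rule homeomorphic_sym[THEN iffD1])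
qed

end

theorem theorem11:
  fixes x :: "nat \<Rightarrow> real" and m :: nat
  assumes "\<And>n. x n > 0" and "summable x" and "m \<ge> 1"
  shows "(\<exists>C. is_cantor_set C \<and> achievement_set m x homeomorphic C)
       \<or> (\<exists>U. is_finite_union_of_intervals U \<and> achievement_set m x homeomorphic U)
       \<or> (\<exists>K. is_cantorval K \<and> achievement_set m x homeomorphic K)"
proof -
  interpret achievement x m using assms by unfold_locales
  consider (intervals) "is_finite_union_of_intervals E" | (nowhere_dense) "interior E = {}"
    | (cantorval) "interior E \<noteq> {}" "\<not> is_finite_union_of_intervals E" by blast
  then show ?thesis
  proof cases
    case intervals
    then show ?thesis using homeomorphic_refl by blast
  next
    case nowhere_dense
    interpret perfect_nowhere_dense E
      using compact_achievement_set[OF nonneg summable] perfect_achievement_set[OF pos summable m_pos]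
        achievement_set_nonempty \<open>interior E = {}\<close>
      by unfold_locales (auto simp: perfect_set_def)
    have "is_cantor_set middle_thirds_cantor" unfolding is_cantor_set_def by (rule homeomorphic_refl)
    then show ?thesis using homeomorphic_middle_thirds_cantor by blast
  next
    case cantorval
    then have "is_cantorval E" unfolding is_cantorval_def using M_cantorval by blast
    then show ?thesis using homeomorphic_refl by blast
  qed
qed

end
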